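(* Every uniform, non-singular, IC-pseudo injective right $R$-module is quasi-pseudo principally injective.
   Context: All rings are associative with identity and all modules are unitary right $R$-modules. A nonzero module $U$ is uniform if every nonzero submodule of $U$ is essential in $U$. For a module $M$, $Z(M)=\{x\in M: xI=0$ for some essential right ideal $I$ of $R\}$; $M$ is non-singular if $Z(M)=0$. A submodule $A$ of $M$ is closed if it has no proper essential extension inside $M$. For modules $M,N$, $N$ is IC-pseudo $M$-injective if for every submodule $A$ of $M$ that is isomorphic to a closed submodule of $M$, every $R$-monomorphism $A\to N$ extends to an $R$-homomorphism $M\to N$; $M$ is IC-pseudo injective if it is IC-pseudo $M$-injective. A submodule $N$ of $M$ is $M$-cyclic if $N\cong M/L$ for some submodule $L$ of $M$ (equivalently, $N$ is the image of an endomorphism of $M$). $M$ is quasi-pseudo principally injective if for every $M$-cyclic submodule $A$ of $M$, every $R$-monomorphism $A\to M$ extends to an $R$-endomorphism of $M$. *)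

theory Defs
  imports "HOL-Algebra.Ring"
begin

text \<open>Right modules over an arbitrary (not necessarily commutative) ring R.
  HOL-Algebra's module locale requires a commutative ring, so right modules are
  defined here directly.\<close>

record ('r, 'm) rmodule = "'m ring" +
  rsmult :: "'m \<Rightarrow> 'r \<Rightarrow> 'm"

locale right_module =
  R: ring R + M: abelian_group M
  for R :: "('r, 'a) ring_scheme" and M :: "('r, 'm, 'b) rmodule_scheme" +
  assumes rsmult_closed:
      "\<lbrakk> x \<in> carrier M; r \<in> carrier R \<rbrakk> \<Longrightarrow> rsmult M x r \<in> carrier M"
    and rsmult_add_left:
      "\<lbrakk> x \<in> carrier M; y \<in> carrier M; r \<in> carrier R \<rbrakk> \<Longrightarrow>
         rsmult M (x \<oplus>\<^bsub>M\<^esub> y) r = rsmult M x r \<oplus>\<^bsub>M\<^esub> rsmult M y r"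
    and rsmult_add_right:
      "\<lbrakk> x \<in> carrier M; r \<in> carrier R; s \<in> carrier R \<rbrakk> \<Longrightarrow>
         rsmult M x (r \<oplus>\<^bsub>R\<^esub> s) = rsmult M x r \<oplus>\<^bsub>M\<^esub> rsmult M x s"
    and rsmult_assoc:
      "\<lbrakk> x \<in> carrier M; r \<in> carrier R; s \<in> carrier R \<rbrakk> \<Longrightarrow>
         rsmult M x (r \<otimes>\<^bsub>R\<^esub> s) = rsmult M (rsmult M x r) s"
    and rsmult_one:
      "x \<in> carrier M \<Longrightarrow> rsmult M x \<one>\<^bsub>R\<^esub> = x"

definition submod :: "('r, 'a) ring_scheme \<Rightarrow> ('r, 'm, 'b) rmodule_scheme \<Rightarrow> 'm set \<Rightarrow> bool" where
  "submod R M N \<longleftrightarrow> N \<subseteq> carrier M \<and> \<zero>\<^bsub>M\<^esub> \<in> N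
     \<and> (\<forall>x\<in>N. \<forall>y\<in>N. x \<oplus>\<^bsub>M\<^esub> y \<in> N)
     \<and> (\<forall>x\<in>N. \<ominus>\<^bsub>M\<^esub> x \<in> N)
     \<and> (\<forall>x\<in>N. \<forall>r\<in>carrier R. rsmult M x r \<in> N)"

definition essential_in :: "('r, 'a) ring_scheme \<Rightarrow> ('r, 'm, 'b) rmodule_scheme \<Rightarrow> 'm set \<Rightarrow> 'm set \<Rightarrow> bool" where
  "essential_in R M A B \<longleftrightarrow> submod R M A \<and> submod R M B \<and> A \<subseteq> B
     \<and> (\<forall>C. submod R M C \<and> C \<subseteq> B \<and> C \<noteq> {\<zero>\<^bsub>M\<^esub>} \<longrightarrow> C \<inter> A \<noteq> {\<zero>\<^bsub>M\<^esub>})"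

definition uniform_mod :: "('r, 'a) ring_scheme \<Rightarrow> ('r, 'm, 'b) rmodule_scheme \<Rightarrow> bool" where
  "uniform_mod R M \<longleftrightarrow> carrier M \<noteq> {\<zero>\<^bsub>M\<^esub>}
     \<and> (\<forall>U. submod R M U \<and> U \<noteq> {\<zero>\<^bsub>M\<^esub>} \<longrightarrow> essential_in R M U (carrier M))"

definition right_ideal :: "'r set \<Rightarrow> ('r, 'a) ring_scheme \<Rightarrow> bool" where
  "right_ideal I R \<longleftrightarrow> I \<subseteq> carrier R \<and> \<zero>\<^bsub>R\<^esub> \<in> I
     \<and> (\<forall>x\<in>I. \<forall>y\<in>I. x \<oplus>\<^bsub>R\<^esub> y \<in> I)
     \<and> (\<forall>x\<in>I. \<ominus>\<^bsub>R\<^esub> x \<in> I)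
     \<and> (\<forall>x\<in>I. \<forall>r\<in>carrier R. x \<otimes>\<^bsub>R\<^esub> r \<in> I)"

definition essential_right_ideal :: "'r set \<Rightarrow> ('r, 'a) ring_scheme \<Rightarrow> bool" where
  "essential_right_ideal I R \<longleftrightarrow> right_ideal I R
     \<and> (\<forall>J. right_ideal J R \<and> J \<noteq> {\<zero>\<^bsub>R\<^esub>} \<longrightarrow> J \<inter> I \<noteq> {\<zero>\<^bsub>R\<^esub>})"

definition singular_sub :: "('r, 'a) ring_scheme \<Rightarrow> ('r, 'm, 'b) rmodule_scheme \<Rightarrow> 'm set" where
  "singular_sub R M = {x \<in> carrier M. \<exists>I. essential_right_ideal I R
                                         \<and> (\<forall>a\<in>I. rsmult M x a = \<zero>\<^bsub>M\<^esub>)}"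

definition nonsingular_mod :: "('r, 'a) ring_scheme \<Rightarrow> ('r, 'm, 'b) rmodule_scheme \<Rightarrow> bool" where
  "nonsingular_mod R M \<longleftrightarrow> singular_sub R M = {\<zero>\<^bsub>M\<^esub>}"

definition closed_sub :: "('r, 'a) ring_scheme \<Rightarrow> ('r, 'm, 'b) rmodule_scheme \<Rightarrow> 'm set \<Rightarrow> bool" where
  "closed_sub R M A \<longleftrightarrow> submod R M A
     \<and> (\<forall>B. submod R M B \<and> essential_in R M A B \<longrightarrow> B = A)"

text \<open>R-homomorphisms from a submodule A of M into M (only the values on A matter).\<close>
definition rhom :: "('r, 'a) ring_scheme \<Rightarrow> ('r, 'm, 'b) rmodule_scheme \<Rightarrow> 'm set \<Rightarrow> ('m \<Rightarrow> 'm) \<Rightarrow> bool" where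
  "rhom R M A f \<longleftrightarrow> (\<forall>x\<in>A. f x \<in> carrier M)
     \<and> (\<forall>x\<in>A. \<forall>y\<in>A. f (x \<oplus>\<^bsub>M\<^esub> y) = f x \<oplus>\<^bsub>M\<^esub> f y)
     \<and> (\<forall>x\<in>A. \<forall>r\<in>carrier R. f (rsmult M x r) = rsmult M (f x) r)"

definition rmono :: "('r, 'a) ring_scheme \<Rightarrow> ('r, 'm, 'b) rmodule_scheme \<Rightarrow> 'm set \<Rightarrow> ('m \<Rightarrow> 'm) \<Rightarrow> bool" where
  "rmono R M A f \<longleftrightarrow> rhom R M A f \<and> inj_on f A"

definition sub_iso :: "('r, 'a) ring_scheme \<Rightarrow> ('r, 'm, 'b) rmodule_scheme \<Rightarrow> 'm set \<Rightarrow> 'm set \<Rightarrow> bool" where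
  "sub_iso R M A C \<longleftrightarrow> (\<exists>h. rhom R M A h \<and> bij_betw h A C)"

definition extends_to_endo :: "('r, 'a) ring_scheme \<Rightarrow> ('r, 'm, 'b) rmodule_scheme \<Rightarrow> 'm set \<Rightarrow> ('m \<Rightarrow> 'm) \<Rightarrow> bool" where
  "extends_to_endo R M A f \<longleftrightarrow> (\<exists>g. rhom R M (carrier M) g \<and> (\<forall>x\<in>A. g x = f x))"

text \<open>IC-pseudo injective (= IC-pseudo M-injective for N = M).\<close>
definition IC_pseudo_injective :: "('r, 'a) ring_scheme \<Rightarrow> ('r, 'm, 'b) rmodule_scheme \<Rightarrow> bool" where
  "IC_pseudo_injective R M \<longleftrightarrow>
     (\<forall>A. submod R M A \<and> (\<exists>C. closed_sub R M C \<and> sub_iso R M A C) \<longrightarrow>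
        (\<forall>f. rmono R M A f \<longrightarrow> extends_to_endo R M A f))"

definition M_cyclic :: "('r, 'a) ring_scheme \<Rightarrow> ('r, 'm, 'b) rmodule_scheme \<Rightarrow> 'm set \<Rightarrow> bool" where
  "M_cyclic R M A \<longleftrightarrow> (\<exists>g. rhom R M (carrier M) g \<and> A = g ` carrier M)"

definition quasi_pseudo_principally_injective :: "('r, 'a) ring_scheme \<Rightarrow> ('r, 'm, 'b) rmodule_scheme \<Rightarrow> bool" where
  "quasi_pseudo_principally_injective R M \<longleftrightarrow>
     (\<forall>A. submod R M A \<and> M_cyclic R M A \<longrightarrow>
        (\<forall>f. rmono R M A f \<longrightarrow> extends_to_endo R M A f))"

end

theory Submission
  imports Defs
begin

text \<open>If a nonzero endomorphism g of M had a nonzero kernel K, uniformity would make K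
  essential in M. For every x the right ideal {r. x r \<in> K} is then essential, and it
  annihilates g x; so g x is singular, hence zero, contradicting g \<noteq> 0. Thus every nonzero
  endomorphism is injective, and every nonzero M-cyclic submodule is isomorphic to M, which
  is closed in itself: IC-pseudo injectivity applies.\<close>

context right_module
begin

lemma idempotent_eq_zero: "a \<in> carrier M \<Longrightarrow> a \<oplus>\<^bsub>M\<^esub> a = a \<Longrightarrow> a = \<zero>\<^bsub>M\<^esub>"
  by (metis M.add.l_cancel_one M.add.Units_l_cancel M.add.Units_eq M.zero_closed M.r_zero)

lemma rsmult_zero_left: "r \<in> carrier R \<Longrightarrow> rsmult M \<zero>\<^bsub>M\<^esub> r = \<zero>\<^bsub>M\<^esub>"
  using rsmult_add_left[of "\<zero>\<^bsub>M\<^esub>" "\<zero>\<^bsub>M\<^esub>" r] rsmult_closed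
  by (intro idempotent_eq_zero) auto

lemma rsmult_zero_right: "x \<in> carrier M \<Longrightarrow> rsmult M x \<zero>\<^bsub>R\<^esub> = \<zero>\<^bsub>M\<^esub>"
  using rsmult_add_right[of x "\<zero>\<^bsub>R\<^esub>" "\<zero>\<^bsub>R\<^esub>"] rsmult_closed
  by (intro idempotent_eq_zero) auto

lemma rsmult_minus_right:
  assumes x: "x \<in> carrier M" and r: "r \<in> carrier R"
  shows "rsmult M x (\<ominus>\<^bsub>R\<^esub> r) = \<ominus>\<^bsub>M\<^esub> rsmult M x r"
proof -
  have "rsmult M x r \<oplus>\<^bsub>M\<^esub> rsmult M x (\<ominus>\<^bsub>R\<^esub> r) = \<zero>\<^bsub>M\<^esub>"
    using rsmult_add_right[of x r "\<ominus>\<^bsub>R\<^esub> r"] x r rsmult_zero_right by (simp add: R.r_neg)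
  thus ?thesis
    using x r rsmult_closed by (metis M.add.inv_equality M.a_comm R.a_inv_closed)
qed

lemma rhom_zero:
  assumes A: "submod R M A" and f: "rhom R M A f"
  shows "f \<zero>\<^bsub>M\<^esub> = \<zero>\<^bsub>M\<^esub>"
proof -
  have "\<zero>\<^bsub>M\<^esub> \<in> A" using A unfolding submod_def by auto
  with f show ?thesis
    unfolding rhom_def by (metis M.r_zero M.zero_closed idempotent_eq_zero)
qed

lemma rhom_minus:
  assumes A: "submod R M A" and f: "rhom R M A f" and x: "x \<in> A"
  shows "f (\<ominus>\<^bsub>M\<^esub> x) = \<ominus>\<^bsub>M\<^esub> f x"
proof -
  have nx: "\<ominus>\<^bsub>M\<^esub> x \<in> A" "x \<in> carrier M" using A x unfolding submod_def by auto
  have fx: "f x \<in> carrier M" "f (\<ominus>\<^bsub>M\<^esub> x) \<in> carrier M" using f x nx unfolding rhom_def by auto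
  have "f x \<oplus>\<^bsub>M\<^esub> f (\<ominus>\<^bsub>M\<^esub> x) = f (x \<oplus>\<^bsub>M\<^esub> \<ominus>\<^bsub>M\<^esub> x)"
    using f x nx unfolding rhom_def by auto
  also have "\<dots> = \<zero>\<^bsub>M\<^esub>" using rhom_zero[OF A f] nx by (simp add: M.r_neg)
  finally show ?thesis using fx by (metis M.add.inv_equality M.a_comm)
qed

lemma submod_carrier: "submod R M (carrier M)"
  unfolding submod_def using rsmult_closed by auto

lemma closed_sub_carrier: "closed_sub R M (carrier M)"
  unfolding closed_sub_def essential_in_def using submod_carrier by (auto simp: submod_def)

lemma submod_cyclic:
  assumes z: "z \<in> carrier M"
  shows "submod R M {rsmult M z s |s. s \<in> carrier R}"
  unfolding submod_def
proof (intro conjI ballI)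
  let ?C = "{rsmult M z s |s. s \<in> carrier R}"
  have zs: "rsmult M z s \<in> ?C" if "s \<in> carrier R" for s
    using that by blast
  show "?C \<subseteq> carrier M" using z rsmult_closed by auto
  show "\<zero>\<^bsub>M\<^esub> \<in> ?C" using zs[of "\<zero>\<^bsub>R\<^esub>"] z rsmult_zero_right by simp
  fix x assume "x \<in> ?C"
  then obtain s where s: "s \<in> carrier R" "x = rsmult M z s" by auto
  show "\<ominus>\<^bsub>M\<^esub> x \<in> ?C"
    using zs[of "\<ominus>\<^bsub>R\<^esub> s"] s z rsmult_minus_right[of z s] by simp
  show "rsmult M x r \<in> ?C" if "r \<in> carrier R" for r
    using zs[of "s \<otimes>\<^bsub>R\<^esub> r"] s that z rsmult_assoc[of z s r] by simp
  show "x \<oplus>\<^bsub>M\<^esub> y \<in> ?C" if "y \<in> ?C" for y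
  proof -
    obtain t where t: "t \<in> carrier R" "y = rsmult M z t" using \<open>y \<in> ?C\<close> by auto
    show ?thesis using zs[of "s \<oplus>\<^bsub>R\<^esub> t"] s t z rsmult_add_right[of z s t] by simp
  qed
qed

lemma submod_kernel:
  assumes g: "rhom R M (carrier M) g"
  shows "submod R M {z \<in> carrier M. g z = \<zero>\<^bsub>M\<^esub>}"
  unfolding submod_def
proof (intro conjI ballI)
  let ?K = "{z \<in> carrier M. g z = \<zero>\<^bsub>M\<^esub>}"
  show "?K \<subseteq> carrier M" by auto
  show "\<zero>\<^bsub>M\<^esub> \<in> ?K" using rhom_zero[OF submod_carrier g] by auto
  fix x assume x: "x \<in> ?K"
  show "\<ominus>\<^bsub>M\<^esub> x \<in> ?K" using x rhom_minus[OF submod_carrier g, of x] by auto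
  show "rsmult M x r \<in> ?K" if "r \<in> carrier R" for r
    using x that g rsmult_closed rsmult_zero_left unfolding rhom_def by auto
  show "x \<oplus>\<^bsub>M\<^esub> y \<in> ?K" if "y \<in> ?K" for y
    using x that g unfolding rhom_def by auto
qed

lemma right_ideal_colon:
  assumes K: "submod R M K" and x: "x \<in> carrier M"
  shows "right_ideal {r \<in> carrier R. rsmult M x r \<in> K} R"
  unfolding right_ideal_def
proof (intro conjI ballI)
  let ?I = "{r \<in> carrier R. rsmult M x r \<in> K}"
  show "?I \<subseteq> carrier R" by auto
  show "\<zero>\<^bsub>R\<^esub> \<in> ?I" using K x rsmult_zero_right unfolding submod_def by auto
  fix a assume a: "a \<in> ?I"
  show "\<ominus>\<^bsub>R\<^esub> a \<in> ?I" using K x a rsmult_minus_right unfolding submod_def by auto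
  show "a \<otimes>\<^bsub>R\<^esub> r \<in> ?I" if "r \<in> carrier R" for r
    using K x a that rsmult_assoc unfolding submod_def by auto
  show "a \<oplus>\<^bsub>R\<^esub> b \<in> ?I" if "b \<in> ?I" for b
    using K x a that rsmult_add_right unfolding submod_def by auto
qed

lemma essential_right_ideal_colon:
  assumes K: "essential_in R M K (carrier M)" and x: "x \<in> carrier M"
  shows "essential_right_ideal {r \<in> carrier R. rsmult M x r \<in> K} R"
  unfolding essential_right_ideal_def
proof (intro conjI allI impI)
  let ?I = "{r \<in> carrier R. rsmult M x r \<in> K}"
  have Ks: "submod R M K" using K unfolding essential_in_def by auto
  show "right_ideal ?I R" using right_ideal_colon[OF Ks x] .
  fix J assume J: "right_ideal J R \<and> J \<noteq> {\<zero>\<^bsub>R\<^esub>}"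
  then obtain j where j: "j \<in> J" "j \<noteq> \<zero>\<^bsub>R\<^esub>" "j \<in> carrier R"
    unfolding right_ideal_def by blast
  show "J \<inter> ?I \<noteq> {\<zero>\<^bsub>R\<^esub>}"
  proof (cases "rsmult M x j \<in> K")
    case True
    thus ?thesis using j by auto
  next
    case False
    define z where "z = rsmult M x j"
    define C where "C = {rsmult M z s |s. s \<in> carrier R}"
    have z: "z \<in> carrier M" "z \<noteq> \<zero>\<^bsub>M\<^esub>"
      using False Ks x j rsmult_closed unfolding z_def submod_def by auto
    have Cs: "submod R M C" unfolding C_def using submod_cyclic[OF z(1)] .
    have "z \<in> C" unfolding C_def using z rsmult_one R.one_closed by force
    hence "C \<noteq> {\<zero>\<^bsub>M\<^esub>}" using z by auto
    hence "C \<inter> K \<noteq> {\<zero>\<^bsub>M\<^esub>}" using K Cs unfolding essential_in_def submod_def by auto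
    moreover have "\<zero>\<^bsub>M\<^esub> \<in> C \<inter> K" using Cs Ks unfolding submod_def by auto
    ultimately obtain s where s: "s \<in> carrier R" "rsmult M z s \<in> K" "rsmult M z s \<noteq> \<zero>\<^bsub>M\<^esub>"
      unfolding C_def by blast
    have xjs: "rsmult M x (j \<otimes>\<^bsub>R\<^esub> s) = rsmult M z s"
      using s x j rsmult_assoc unfolding z_def by auto
    have "j \<otimes>\<^bsub>R\<^esub> s \<in> J \<inter> ?I" using J j s xjs unfolding right_ideal_def by auto
    moreover have "j \<otimes>\<^bsub>R\<^esub> s \<noteq> \<zero>\<^bsub>R\<^esub>" using xjs s rsmult_zero_right x by auto
    ultimately show ?thesis by blast
  qed
qed

lemma singular_if_kernel_essential:
  assumes g: "rhom R M (carrier M) g"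
    and K: "essential_in R M {z \<in> carrier M. g z = \<zero>\<^bsub>M\<^esub>} (carrier M)"
    and x: "x \<in> carrier M"
  shows "g x \<in> singular_sub R M"
  unfolding singular_sub_def
proof (intro CollectI conjI exI)
  show "g x \<in> carrier M" using g x unfolding rhom_def by auto
  show "essential_right_ideal {r \<in> carrier R. rsmult M x r \<in> {z \<in> carrier M. g z = \<zero>\<^bsub>M\<^esub>}} R"
    using essential_right_ideal_colon[OF K x] .
  show "\<forall>a\<in>{r \<in> carrier R. rsmult M x r \<in> {z \<in> carrier M. g z = \<zero>\<^bsub>M\<^esub>}}. rsmult M (g x) a = \<zero>\<^bsub>M\<^esub>"
    using g x unfolding rhom_def by auto
qed

lemma endo_inj_on_or_zero:
  assumes U: "uniform_mod R M" and N: "nonsingular_mod R M"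
    and g: "rhom R M (carrier M) g"
  shows "(\<forall>y\<in>carrier M. g y = \<zero>\<^bsub>M\<^esub>) \<or> inj_on g (carrier M)"
proof (rule disjCI)
  assume "\<not> inj_on g (carrier M)"
  then obtain u v where uv: "u \<in> carrier M" "v \<in> carrier M" "g u = g v" "u \<noteq> v"
    unfolding inj_on_def by blast
  let ?K = "{z \<in> carrier M. g z = \<zero>\<^bsub>M\<^esub>}"
  have "g (u \<oplus>\<^bsub>M\<^esub> \<ominus>\<^bsub>M\<^esub> v) = g u \<oplus>\<^bsub>M\<^esub> \<ominus>\<^bsub>M\<^esub> g v"
    using g uv rhom_minus[OF submod_carrier g] unfolding rhom_def by auto
  hence "u \<oplus>\<^bsub>M\<^esub> \<ominus>\<^bsub>M\<^esub> v \<in> ?K" using g uv unfolding rhom_def by (auto simp: M.r_neg)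
  moreover have "u \<oplus>\<^bsub>M\<^esub> \<ominus>\<^bsub>M\<^esub> v \<noteq> \<zero>\<^bsub>M\<^esub>"
    using uv by (metis M.add.inv_equality M.a_comm M.minus_minus M.a_inv_closed)
  ultimately have "?K \<noteq> {\<zero>\<^bsub>M\<^esub>}" by blast
  hence "essential_in R M ?K (carrier M)"
    using U submod_kernel[OF g] unfolding uniform_mod_def by auto
  thus "\<forall>y\<in>carrier M. g y = \<zero>\<^bsub>M\<^esub>"
    using singular_if_kernel_essential[OF g] N unfolding nonsingular_mod_def by blast
qed

lemma sub_iso_image_carrier:
  assumes g: "rhom R M (carrier M) g" and inj: "inj_on g (carrier M)"
  shows "sub_iso R M (g ` carrier M) (carrier M)"
  unfolding sub_iso_def
proof (intro exI conjI)
  let ?h = "inv_into (carrier M) g"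
  have hg: "\<And>z. z \<in> carrier M \<Longrightarrow> ?h (g z) = z" using inj by (simp add: inv_into_f_f)
  show "bij_betw ?h (g ` carrier M) (carrier M)"
    using inj by (simp add: bij_betw_inv_into inj_on_imp_bij_betw)
  have "?h (g u \<oplus>\<^bsub>M\<^esub> g v) = ?h (g u) \<oplus>\<^bsub>M\<^esub> ?h (g v)"
    if "u \<in> carrier M" "v \<in> carrier M" for u v
    using that g hg unfolding rhom_def by (metis M.add.m_closed)
  moreover have "?h (rsmult M (g u) r) = rsmult M (?h (g u)) r"
    if "u \<in> carrier M" "r \<in> carrier R" for u r
    using that g hg rsmult_closed unfolding rhom_def by metis
  ultimately show "rhom R M (g ` carrier M) ?h"
    unfolding rhom_def using hg by auto
qed

lemma extends_to_endo_zero_submod: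
  assumes A: "submod R M A" "A \<subseteq> {\<zero>\<^bsub>M\<^esub>}" and f: "rhom R M A f"
  shows "extends_to_endo R M A f"
  unfolding extends_to_endo_def
proof (intro exI conjI)
  show "rhom R M (carrier M) (\<lambda>_. \<zero>\<^bsub>M\<^esub>)" unfolding rhom_def using rsmult_zero_left by auto
  show "\<forall>x\<in>A. \<zero>\<^bsub>M\<^esub> = f x" using A rhom_zero[OF A(1) f] by auto
qed

end

theorem proposition2p11:
  fixes R :: "('r, 'a) ring_scheme" and M :: "('r, 'm, 'b) rmodule_scheme"
  assumes "right_module R M"
    and "uniform_mod R M"
    and "nonsingular_mod R M"
    and "IC_pseudo_injective R M"
  shows "quasi_pseudo_principally_injective R M"
  unfolding quasi_pseudo_principally_injective_def
proof (intro allI impI)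
  interpret right_module R M by fact
  fix A f assume A: "submod R M A \<and> M_cyclic R M A" and f: "rmono R M A f"
  then obtain g where g: "rhom R M (carrier M) g" "A = g ` carrier M"
    unfolding M_cyclic_def by auto
  consider "\<forall>y\<in>carrier M. g y = \<zero>\<^bsub>M\<^esub>" | "inj_on g (carrier M)"
    using endo_inj_on_or_zero[OF assms(2,3) g(1)] by blast
  then show "extends_to_endo R M A f"
  proof cases
    case 1
    then show ?thesis
      using extends_to_endo_zero_submod A f g(2) unfolding rmono_def by auto
  next
    case 2
    then have "sub_iso R M A (carrier M)" using sub_iso_image_carrier g by simp
    then show ?thesis
      using assms(4) A f closed_sub_carrier unfolding IC_pseudo_injective_def by blast
  qed
qed

end
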